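(* For the dilution model with $N$ items and $K$ defectives, random Bernoulli$(1/K)$ design and maximum-likelihood decoding, in the regime $N,K\to\infty$ with $K=o(N)$, a number of tests $T=O\!\left(\frac{K\log N}{(1-u)^2}\right)$ is achievable (arbitrarily small average error probability), where $u\in[0,1)$ is the crossover probability of the Z-channel (the probability that $1$ is flipped into $0$).
   Context: Design: $N\times T$ binary matrix with i.i.d. Bernoulli$(1/K)$ entries, $X_j(t)=1$ iff item $j$ is in test $t$. Dilution model: for defective set $S$ ($|S|=K$), $Y(t)=\bigvee_{j\in S}\mathcal Z_{j,t}(X_j(t))$, where each $\mathcal Z_{j,t}$ is an independent use of a Z-channel mapping input $0$ to $0$ with probability $1$ and input $1$ to $0$ with probability $u$ and to $1$ with probability $1-u$. The ML decoder chooses a $K$-subset $S'$ maximizing $p(Y^T\mid\mathbf X_{S'})$; average error probability is averaged over the design, the channel, and $S$ uniform among $K$-subsets. *)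

theory Defs
  imports Complex_Main
begin

text \<open>Items are 0..<N, tests are 0..<T. A design is a boolean matrix X,
  X j t = True iff item j is in test t; outcomes Y t. Entries outside the
  ranges are forced to False so that the sets below are finite.\<close>

definition designs :: "nat \<Rightarrow> nat \<Rightarrow> (nat \<Rightarrow> nat \<Rightarrow> bool) set" where
  "designs N T = {X. \<forall>j t. X j t \<longrightarrow> j < N \<and> t < T}"

definition outcomes :: "nat \<Rightarrow> (nat \<Rightarrow> bool) set" where
  "outcomes T = {Y. \<forall>t. Y t \<longrightarrow> t < T}"

definition defective_sets :: "nat \<Rightarrow> nat \<Rightarrow> nat set set" where
  "defective_sets N K = {S. S \<subseteq> {..<N} \<and> card S = K}"

definition design_prob :: "nat \<Rightarrow> nat \<Rightarrow> nat \<Rightarrow> (nat \<Rightarrow> nat \<Rightarrow> bool) \<Rightarrow> real" where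
  "design_prob N K T X =
     (\<Prod>j<N. \<Prod>t<T. if X j t then 1 / real K else 1 - 1 / real K)"

text \<open>Dilution-model likelihood p(Y^T | X_S): each test t is the OR of independent
  Z-channel outputs; a positive entry is erased (1 to 0) with probability u, so
  Y t = 0 with probability u ^ (number of items of S in test t).\<close>
definition dilution_lik ::
  "real \<Rightarrow> nat \<Rightarrow> (nat \<Rightarrow> nat \<Rightarrow> bool) \<Rightarrow> nat set \<Rightarrow> (nat \<Rightarrow> bool) \<Rightarrow> real" where
  "dilution_lik u T X S Y =
     (\<Prod>t<T. let m = card {j \<in> S. X j t} in if Y t then 1 - u ^ m else u ^ m)"

text \<open>ML decoding error event (ties counted as errors): some other K-subset
  S' has likelihood at least that of the true defective set S.\<close>
definition ml_error ::
  "nat \<Rightarrow> nat \<Rightarrow> nat \<Rightarrow> real \<Rightarrow> (nat \<Rightarrow> nat \<Rightarrow> bool) \<Rightarrow> nat set \<Rightarrow> (nat \<Rightarrow> bool) \<Rightarrow> bool" where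
  "ml_error N K T u X S Y =
     (\<exists>S' \<in> defective_sets N K. S' \<noteq> S \<and> dilution_lik u T X S' Y \<ge> dilution_lik u T X S Y)"

definition avg_error :: "nat \<Rightarrow> nat \<Rightarrow> nat \<Rightarrow> real \<Rightarrow> real" where
  "avg_error N K T u =
     (\<Sum>S \<in> defective_sets N K. \<Sum>X \<in> designs N T. \<Sum>Y \<in> outcomes T.
        (if ml_error N K T u X S Y
         then design_prob N K T X * dilution_lik u T X S Y else 0))
     / real (N choose K)"

end

theory Submission
  imports Defs "HOL-Library.FuncSet"
begin

text \<open>Union bound over Bhattacharyya coefficients. If the ML decoder errs on the true set \<open>S\<close>,
  some \<open>S' \<noteq> S\<close> has \<open>p(Y|S') \<ge> p(Y|S)\<close>, hence \<open>p(Y|S)\<close> is at most the sum over \<open>S'\<close> of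
  \<open>sqrt (p(Y|S) p(Y|S'))\<close>. Summed over \<open>Y\<close> and averaged over the i.i.d. design, this factorises
  over the tests into \<open>\<rho>(S,S') ^ T\<close>, where \<open>\<rho>\<close> is the Bhattacharyya coefficient of a single
  test with a random Bernoulli(1/K) column. With probability at least \<open>exp (-4) / K\<close> a given
  item of \<open>S - S'\<close> is the only item of \<open>S \<union> S'\<close> in the test; such a test contributes
  \<open>sqrt u\<close> instead of 1, so \<open>\<rho>(S,S') \<le> exp (-(1 - sqrt u) exp (-4) / K) ^ |S - S'|\<close>.
  There are at most \<open>N ^ (2 d)\<close> sets \<open>S'\<close> with \<open>|S - S'| = d\<close>, so \<open>T\<close> of order
  \<open>K ln N / (1 - u)\<^sup>2\<close> makes the error probability given \<open>S\<close> at most \<open>K / N\<^sup>2 \<le> 1 / N\<close>.\<close>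

definition column_prob :: "nat \<Rightarrow> nat \<Rightarrow> (nat \<Rightarrow> bool) \<Rightarrow> real" where
  "column_prob N K x = (\<Prod>j<N. if x j then 1 / real K else 1 - 1 / real K)"

definition test_lik :: "real \<Rightarrow> nat set \<Rightarrow> (nat \<Rightarrow> bool) \<Rightarrow> bool \<Rightarrow> real" where
  "test_lik u S x y = (let m = card {j \<in> S. x j} in if y then 1 - u ^ m else u ^ m)"

definition test_bhattacharyya :: "real \<Rightarrow> nat set \<Rightarrow> nat set \<Rightarrow> (nat \<Rightarrow> bool) \<Rightarrow> real" where
  "test_bhattacharyya u S S' x = (\<Sum>y\<in>UNIV. sqrt (test_lik u S x y * test_lik u S' x y))"

definition bhattacharyya :: "nat \<Rightarrow> nat \<Rightarrow> real \<Rightarrow> nat set \<Rightarrow> nat set \<Rightarrow> real" where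
  "bhattacharyya N K u S S' =
     (\<Sum>x \<in> {..<N} \<rightarrow>\<^sub>E UNIV. column_prob N K x * test_bhattacharyya u S S' x)"

text \<open>Outcome vectors and designs are identified with extensional functions on the test and
  item ranges, so that sums over them factorise by \<open>prod_sum_PiE\<close>.\<close>
lemma bij_betw_outcomes:
  "bij_betw (\<lambda>y t. t < T \<and> y t) ({..<T} \<rightarrow>\<^sub>E UNIV) (outcomes T)"
proof (rule bij_betw_byWitness[where f' = "\<lambda>Y. restrict Y {..<T}"])
  show "\<forall>Y \<in> outcomes T. (\<lambda>t. t < T \<and> restrict Y {..<T} t) = Y"
    by (auto simp: outcomes_def fun_eq_iff)
  show "\<forall>y \<in> {..<T} \<rightarrow>\<^sub>E UNIV. restrict (\<lambda>t. t < T \<and> y t) {..<T} = y"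
  proof
    fix y :: "nat \<Rightarrow> bool" assume "y \<in> {..<T} \<rightarrow>\<^sub>E UNIV"
    moreover have "restrict (\<lambda>t. t < T \<and> y t) {..<T} = restrict y {..<T}"
      by (rule restrict_ext) simp
    ultimately show "restrict (\<lambda>t. t < T \<and> y t) {..<T} = y"
      by simp
  qed
qed (auto simp: outcomes_def)

lemma bij_betw_designs:
  "bij_betw (\<lambda>G j t. t < T \<and> j < N \<and> G t j)
     ({..<T} \<rightarrow>\<^sub>E ({..<N} \<rightarrow>\<^sub>E UNIV)) (designs N T)"
proof (rule bij_betw_byWitness[where f' = "\<lambda>X. \<lambda>t\<in>{..<T}. \<lambda>j\<in>{..<N}. X j t"])
  show "\<forall>X \<in> designs N T. (\<lambda>j t. t < T \<and> j < N \<and> (\<lambda>t\<in>{..<T}. \<lambda>j\<in>{..<N}. X j t) t j) = X"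
    by (auto simp: designs_def fun_eq_iff)
  show "\<forall>G \<in> {..<T} \<rightarrow>\<^sub>E ({..<N} \<rightarrow>\<^sub>E UNIV).
          (\<lambda>t\<in>{..<T}. \<lambda>j\<in>{..<N}. t < T \<and> j < N \<and> G t j) = G"
  proof
    fix G :: "nat \<Rightarrow> nat \<Rightarrow> bool" assume G: "G \<in> {..<T} \<rightarrow>\<^sub>E ({..<N} \<rightarrow>\<^sub>E UNIV)"
    have "(\<lambda>j\<in>{..<N}. t < T \<and> j < N \<and> G t j) = G t" if "t < T" for t
    proof -
      have "G t \<in> {..<N} \<rightarrow>\<^sub>E UNIV" using G that by auto
      moreover have "(\<lambda>j\<in>{..<N}. t < T \<and> j < N \<and> G t j) = restrict (G t) {..<N}"
        using that by (intro restrict_ext) simp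
      ultimately show ?thesis by simp
    qed
    then have "(\<lambda>t\<in>{..<T}. \<lambda>j\<in>{..<N}. t < T \<and> j < N \<and> G t j) = restrict G {..<T}"
      by (intro restrict_ext) simp
    with G show "(\<lambda>t\<in>{..<T}. \<lambda>j\<in>{..<N}. t < T \<and> j < N \<and> G t j) = G"
      by simp
  qed
qed (auto simp: designs_def)

lemma design_prob_columns:
  "design_prob N K T (\<lambda>j t. t < T \<and> j < N \<and> G t j) = (\<Prod>t<T. column_prob N K (G t))"
  unfolding design_prob_def column_prob_def by (subst prod.swap) simp

lemma dilution_lik_columns:
  assumes "S \<subseteq> {..<N}"
  shows "dilution_lik u T (\<lambda>j t. t < T \<and> j < N \<and> G t j) S (\<lambda>t. t < T \<and> y t)
       = (\<Prod>t<T. test_lik u S (G t) (y t))"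
proof -
  have "{j \<in> S. t < T \<and> j < N \<and> G t j} = {j \<in> S. G t j}" if "t < T" for t
    using assms that by auto
  then show ?thesis
    unfolding dilution_lik_def test_lik_def by (intro prod.cong) simp_all
qed

lemma real_sqrt_prod: "sqrt (\<Prod>a\<in>A. f a) = (\<Prod>a\<in>A. sqrt (f a))"
  by (induction A rule: infinite_finite_induct) (simp_all add: real_sqrt_mult)

lemma sum_design_bhattacharyya:
  assumes "S \<subseteq> {..<N}" "S' \<subseteq> {..<N}"
  shows "(\<Sum>X\<in>designs N T. design_prob N K T X *
            (\<Sum>Y\<in>outcomes T. sqrt (dilution_lik u T X S Y * dilution_lik u T X S' Y)))
       = bhattacharyya N K u S S' ^ T"
proof -
  let ?b = "\<lambda>x y. sqrt (test_lik u S x y * test_lik u S' x y)"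
  let ?X = "\<lambda>G j t. t < T \<and> j < N \<and> G t j"
  have "design_prob N K T (?X G) *
          (\<Sum>y \<in> {..<T} \<rightarrow>\<^sub>E UNIV. sqrt (dilution_lik u T (?X G) S (\<lambda>t. t < T \<and> y t) *
                                         dilution_lik u T (?X G) S' (\<lambda>t. t < T \<and> y t)))
      = (\<Prod>t<T. column_prob N K (G t) * test_bhattacharyya u S S' (G t))"
    if "G \<in> {..<T} \<rightarrow>\<^sub>E ({..<N} \<rightarrow>\<^sub>E UNIV)" for G
  proof -
    have "(\<Sum>y \<in> {..<T} \<rightarrow>\<^sub>E UNIV. sqrt (dilution_lik u T (?X G) S (\<lambda>t. t < T \<and> y t) *
                                       dilution_lik u T (?X G) S' (\<lambda>t. t < T \<and> y t)))
        = (\<Sum>y \<in> {..<T} \<rightarrow>\<^sub>E UNIV. \<Prod>t<T. ?b (G t) (y t))"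
      by (simp add: dilution_lik_columns assms real_sqrt_prod flip: prod.distrib)
    also have "\<dots> = (\<Prod>t<T. test_bhattacharyya u S S' (G t))"
      unfolding test_bhattacharyya_def by (rule prod_sum_PiE[symmetric]) simp_all
    finally show ?thesis
      by (simp add: design_prob_columns prod.distrib)
  qed
  then have "(\<Sum>X\<in>designs N T. design_prob N K T X *
            (\<Sum>Y\<in>outcomes T. sqrt (dilution_lik u T X S Y * dilution_lik u T X S' Y)))
      = (\<Sum>G \<in> {..<T} \<rightarrow>\<^sub>E ({..<N} \<rightarrow>\<^sub>E UNIV).
           \<Prod>t<T. column_prob N K (G t) * test_bhattacharyya u S S' (G t))"
    unfolding sum.reindex_bij_betw[OF bij_betw_designs, symmetric]
              sum.reindex_bij_betw[OF bij_betw_outcomes, symmetric]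
    by (intro sum.cong) simp_all
  also have "\<dots> = bhattacharyya N K u S S' ^ T"
    unfolding bhattacharyya_def by (subst prod_sum_PiE[symmetric]) (simp_all add: finite_PiE)
  finally show ?thesis .
qed

lemma le_sum_sqrt_mult:
  fixes f :: "'a \<Rightarrow> real"
  assumes "finite A" "a \<in> A" "0 \<le> x" "x \<le> f a" "\<And>b. b \<in> A \<Longrightarrow> 0 \<le> f b"
  shows "x \<le> (\<Sum>b\<in>A. sqrt (x * f b))"
proof -
  have "x = sqrt (x * x)"
    using assms(3) by simp
  also have "\<dots> \<le> sqrt (x * f a)"
    using assms(3,4) by (intro real_sqrt_le_mono mult_left_mono)
  also have "\<dots> \<le> (\<Sum>b\<in>A. sqrt (x * f b))"
    using assms by (intro member_le_sum) simp_all
  finally show ?thesis .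
qed

lemma dilution_lik_nonneg: "0 \<le> u \<Longrightarrow> u \<le> 1 \<Longrightarrow> 0 \<le> dilution_lik u T X S Y"
  unfolding dilution_lik_def Let_def by (intro prod_nonneg) (simp add: power_le_one)

lemma design_prob_nonneg: "0 \<le> design_prob N K T X"
proof -
  have "1 / real K \<le> 1"
    by (cases K) simp_all
  then show ?thesis
    unfolding design_prob_def by (intro prod_nonneg) simp
qed

lemma finite_defective_sets: "finite (defective_sets N K)"
  by (rule finite_subset[of _ "Pow {..<N}"]) (auto simp: defective_sets_def)

lemma defective_setsD:
  "S \<in> defective_sets N K \<Longrightarrow> S \<subseteq> {..<N} \<and> finite S \<and> card S = K"
  by (auto simp: defective_sets_def intro: finite_subset)

lemma ml_error_le_sum_sqrt:
  assumes "0 \<le> u" "u \<le> 1"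
  shows "(if ml_error N K T u X S Y then dilution_lik u T X S Y else 0)
       \<le> (\<Sum>S'\<in>defective_sets N K - {S}. sqrt (dilution_lik u T X S Y * dilution_lik u T X S' Y))"
proof (cases "ml_error N K T u X S Y")
  case True
  then obtain S' where "S' \<in> defective_sets N K - {S}"
    and "dilution_lik u T X S Y \<le> dilution_lik u T X S' Y"
    unfolding ml_error_def by blast
  then show ?thesis
    using True assms
    by (simp add: le_sum_sqrt_mult finite_defective_sets dilution_lik_nonneg)
qed (simp add: sum_nonneg assms dilution_lik_nonneg)

lemma error_le_sum_bhattacharyya:
  assumes "S \<in> defective_sets N K" "0 \<le> u" "u \<le> 1"
  shows "(\<Sum>X\<in>designs N T. \<Sum>Y\<in>outcomes T.
            if ml_error N K T u X S Y then design_prob N K T X * dilution_lik u T X S Y else 0)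
       \<le> (\<Sum>S'\<in>defective_sets N K - {S}. bhattacharyya N K u S S' ^ T)"
proof -
  let ?D = "defective_sets N K - {S}"
  let ?s = "\<lambda>X Y S'. sqrt (dilution_lik u T X S Y * dilution_lik u T X S' Y)"
  have "(\<Sum>X\<in>designs N T. \<Sum>Y\<in>outcomes T.
            if ml_error N K T u X S Y then design_prob N K T X * dilution_lik u T X S Y else 0)
      \<le> (\<Sum>X\<in>designs N T. \<Sum>Y\<in>outcomes T. design_prob N K T X * (\<Sum>S'\<in>?D. ?s X Y S'))"
  proof (intro sum_mono)
    fix X Y
    have "(if ml_error N K T u X S Y then design_prob N K T X * dilution_lik u T X S Y else 0)
        = design_prob N K T X * (if ml_error N K T u X S Y then dilution_lik u T X S Y else 0)"
      by simp
    also have "\<dots> \<le> design_prob N K T X * (\<Sum>S'\<in>?D. ?s X Y S')"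
      by (intro mult_left_mono ml_error_le_sum_sqrt assms design_prob_nonneg)
    finally show "(if ml_error N K T u X S Y then design_prob N K T X * dilution_lik u T X S Y else 0)
        \<le> design_prob N K T X * (\<Sum>S'\<in>?D. ?s X Y S')" .
  qed
  also have "\<dots> = (\<Sum>X\<in>designs N T. \<Sum>S'\<in>?D. design_prob N K T X * (\<Sum>Y\<in>outcomes T. ?s X Y S'))"
    by (simp only: sum_distrib_left) (rule sum.cong[OF refl], rule sum.swap)
  also have "\<dots> = (\<Sum>S'\<in>?D. \<Sum>X\<in>designs N T. design_prob N K T X * (\<Sum>Y\<in>outcomes T. ?s X Y S'))"
    by (rule sum.swap)
  also have "\<dots> = (\<Sum>S'\<in>?D. bhattacharyya N K u S S' ^ T)"
    using assms(1) by (intro sum.cong refl sum_design_bhattacharyya) (auto dest: defective_setsD)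
  finally show ?thesis .
qed

definition isolated :: "nat set \<Rightarrow> nat \<Rightarrow> (nat \<Rightarrow> bool) \<Rightarrow> bool" where
  "isolated U j x \<longleftrightarrow> x j \<and> (\<forall>i \<in> U - {j}. \<not> x i)"

lemma test_bhattacharyya_nonneg: "0 \<le> u \<Longrightarrow> u \<le> 1 \<Longrightarrow> 0 \<le> test_bhattacharyya u S S' x"
  unfolding test_bhattacharyya_def test_lik_def Let_def
  by (intro sum_nonneg real_sqrt_ge_zero) (simp add: power_le_one)

lemma test_bhattacharyya_le_1:
  assumes "0 \<le> u" "u \<le> 1"
  shows "test_bhattacharyya u S S' x \<le> 1"
proof -
  let ?a = "u ^ card {j \<in> S. x j}" and ?b = "u ^ card {j \<in> S'. x j}"
  have "0 \<le> ?a" "?a \<le> 1" "0 \<le> ?b" "?b \<le> 1"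
    using assms by (simp_all add: power_le_one)
  have "test_bhattacharyya u S S' x = sqrt ((1 - ?a) * (1 - ?b)) + sqrt (?a * ?b)"
    unfolding test_bhattacharyya_def test_lik_def Let_def by (simp add: UNIV_bool)
  also have "\<dots> \<le> ((1 - ?a) + (1 - ?b)) / 2 + (?a + ?b) / 2"
    using \<open>0 \<le> ?a\<close> \<open>?a \<le> 1\<close> \<open>0 \<le> ?b\<close> \<open>?b \<le> 1\<close>
    by (intro add_mono arith_geo_mean_sqrt) simp_all
  also have "\<dots> = 1"
    by (simp add: field_simps)
  finally show ?thesis .
qed

lemma test_bhattacharyya_isolated:
  assumes "j \<in> S - S'" "isolated (S \<union> S') j x"
  shows "test_bhattacharyya u S S' x = sqrt u"
proof -
  have S: "{i \<in> S. x i} = {j}" and S': "{i \<in> S'. x i} = {}"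
    using assms unfolding isolated_def by auto
  show ?thesis
    unfolding test_bhattacharyya_def test_lik_def S S' by (simp add: UNIV_bool)
qed

text \<open>At most one item of \<open>S - S'\<close> is isolated, and then the test outcome distinguishes
  \<open>S\<close> from \<open>S'\<close>.\<close>
lemma test_bhattacharyya_le_isolated:
  assumes "0 \<le> u" "u \<le> 1" "finite S"
  shows "test_bhattacharyya u S S' x
       \<le> 1 - (1 - sqrt u) * (\<Sum>j\<in>S - S'. of_bool (isolated (S \<union> S') j x))"
proof (cases "\<exists>j\<in>S - S'. isolated (S \<union> S') j x")
  case True
  then obtain j where j: "j \<in> S - S'" "isolated (S \<union> S') j x" ..
  then have "(S - S') \<inter> {i. isolated (S \<union> S') i x} = {j}"
    unfolding isolated_def by auto
  then show ?thesis
    using assms j by (simp add: test_bhattacharyya_isolated)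
next
  case False
  then have "(S - S') \<inter> {i. isolated (S \<union> S') i x} = {}"
    by auto
  then show ?thesis
    using assms by (simp add: test_bhattacharyya_le_1)
qed

lemma column_prob_nonneg: "0 \<le> column_prob N K x"
proof -
  have "1 / real K \<le> 1"
    by (cases K) simp_all
  then show ?thesis
    unfolding column_prob_def by (intro prod_nonneg) simp
qed

lemma sum_column_prob: "(\<Sum>x \<in> {..<N} \<rightarrow>\<^sub>E UNIV. column_prob N K x) = 1"
  unfolding column_prob_def by (subst prod_sum_PiE[symmetric]) (simp_all add: UNIV_bool)

lemma of_bool_isolated:
  assumes "j \<in> U" "U \<subseteq> {..<N}"
  shows "of_bool (isolated U j x)
       = (\<Prod>i<N. if i = j then of_bool (x i) else if i \<in> U then of_bool (\<not> x i) else (1::real))"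
proof (cases "isolated U j x")
  case True
  then show ?thesis
    by (simp add: isolated_def prod.neutral)
next
  case False
  then obtain i where "i \<in> {..<N}"
    and "(if i = j then of_bool (x i) else if i \<in> U then of_bool (\<not> x i) else 1) = (0::real)"
    using assms unfolding isolated_def by fastforce
  then have "(\<Prod>i<N. if i = j then of_bool (x i) else if i \<in> U then of_bool (\<not> x i) else (1::real)) = 0"
    by (intro prod_zero[OF finite_lessThan] bexI)
  with False show ?thesis
    by simp
qed

lemma prob_isolated:
  assumes "j \<in> U" "U \<subseteq> {..<N}"
  shows "(\<Sum>x \<in> {..<N} \<rightarrow>\<^sub>E UNIV. column_prob N K x * of_bool (isolated U j x))
       = 1 / real K * (1 - 1 / real K) ^ card (U - {j})"
proof -
  define r where "r i v = (if v then 1 / real K else 1 - 1 / real K) *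
      (if i = j then of_bool v else if i \<in> U then of_bool (\<not> v) else (1::real))" for i v
  have "(\<Sum>x \<in> {..<N} \<rightarrow>\<^sub>E UNIV. column_prob N K x * of_bool (isolated U j x))
      = (\<Sum>x \<in> {..<N} \<rightarrow>\<^sub>E UNIV. \<Prod>i<N. r i (x i))"
    by (simp add: of_bool_isolated[OF assms] column_prob_def r_def prod.distrib)
  also have "\<dots> = (\<Prod>i<N. \<Sum>v\<in>UNIV. r i v)"
    by (rule prod_sum_PiE[symmetric]) simp_all
  also have "\<dots> = (\<Prod>i\<in>U. if i = j then 1 / real K else 1 - 1 / real K)"
    using assms by (intro prod.mono_neutral_cong_right) (auto simp: r_def UNIV_bool)
  also have "\<dots> = 1 / real K * (\<Prod>i\<in>U - {j}. 1 - 1 / real K)"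
    by (subst prod.remove[OF finite_subset[OF assms(2) finite_lessThan] assms(1)]) simp
  finally show ?thesis
    by simp
qed

lemma exp_le_one_minus_inverse_power:
  assumes "2 \<le> K"
  shows "exp (-4) \<le> (1 - 1 / real K) ^ (2 * K)"
proof -
  let ?x = "1 / real K"
  have x: "0 \<le> ?x" "?x \<le> 1 / 2"
    using assms by auto
  have "-4 \<le> real (2 * K) * (- ?x - 2 * ?x\<^sup>2)"
    using assms by (simp add: divide_simps power2_eq_square)
  also have "\<dots> \<le> real (2 * K) * ln (1 - ?x)"
    using ln_one_minus_pos_lower_bound[OF x] by (intro mult_left_mono) simp_all
  finally have "exp (-4) \<le> exp (real (2 * K) * ln (1 - ?x))"
    by simp
  also have "\<dots> = (1 - ?x) ^ (2 * K)"
    using x by (simp only: exp_of_nat_mult exp_ln)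
  finally show ?thesis .
qed

lemma prob_isolated_ge:
  assumes "2 \<le> K" "j \<in> S" "S \<subseteq> {..<N}" "S' \<subseteq> {..<N}" "card S = K" "card S' = K"
  shows "exp (-4) / real K
       \<le> (\<Sum>x \<in> {..<N} \<rightarrow>\<^sub>E UNIV. column_prob N K x * of_bool (isolated (S \<union> S') j x))"
proof -
  have "card (S \<union> S' - {j}) \<le> 2 * K"
    using card_Un_le[of S S'] card_Diff1_le[of "S \<union> S'" j] assms(5,6) by linarith
  then have "(1 - 1 / real K) ^ (2 * K) \<le> (1 - 1 / real K) ^ card (S \<union> S' - {j})"
    using assms(1) by (intro power_decreasing) simp_all
  with exp_le_one_minus_inverse_power[OF assms(1)]
  have "exp (-4) / real K \<le> 1 / real K * (1 - 1 / real K) ^ card (S \<union> S' - {j})"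
    by (simp add: divide_right_mono)
  also have "\<dots> = (\<Sum>x \<in> {..<N} \<rightarrow>\<^sub>E UNIV. column_prob N K x * of_bool (isolated (S \<union> S') j x))"
    using assms by (intro prob_isolated[symmetric]) auto
  finally show ?thesis .
qed

lemma bhattacharyya_nonneg: "0 \<le> u \<Longrightarrow> u \<le> 1 \<Longrightarrow> 0 \<le> bhattacharyya N K u S S'"
  unfolding bhattacharyya_def
  by (intro sum_nonneg mult_nonneg_nonneg column_prob_nonneg test_bhattacharyya_nonneg)

lemma bhattacharyya_le_exp:
  assumes "2 \<le> K" "0 \<le> u" "u \<le> 1"
    and "S \<subseteq> {..<N}" "S' \<subseteq> {..<N}" "card S = K" "card S' = K"
  shows "bhattacharyya N K u S S' \<le> exp (- ((1 - sqrt u) * exp (-4) / real K)) ^ card (S - S')"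
proof -
  let ?C = "{..<N} \<rightarrow>\<^sub>E (UNIV :: bool set)"
  let ?I = "\<lambda>j x. of_bool (isolated (S \<union> S') j x) :: real"
  let ?D = "S - S'"
  have "bhattacharyya N K u S S'
      \<le> (\<Sum>x\<in>?C. column_prob N K x * (1 - (1 - sqrt u) * (\<Sum>j\<in>?D. ?I j x)))"
    unfolding bhattacharyya_def using assms finite_subset[OF assms(4)]
    by (intro sum_mono mult_left_mono test_bhattacharyya_le_isolated column_prob_nonneg) simp_all
  also have "\<dots> = (\<Sum>x\<in>?C. column_prob N K x)
                  - (1 - sqrt u) * (\<Sum>x\<in>?C. \<Sum>j\<in>?D. column_prob N K x * ?I j x)"
    by (simp add: right_diff_distrib sum_subtractf sum_distrib_left mult.left_commute)
  also have "\<dots> = 1 - (1 - sqrt u) * (\<Sum>j\<in>?D. \<Sum>x\<in>?C. column_prob N K x * ?I j x)"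
    unfolding sum_column_prob by (subst sum.swap) (rule refl)
  also have "\<dots> \<le> 1 - (1 - sqrt u) * (real (card ?D) * (exp (-4) / real K))"
  proof -
    have "real (card ?D) * (exp (-4) / real K) \<le> (\<Sum>j\<in>?D. \<Sum>x\<in>?C. column_prob N K x * ?I j x)"
      using sum_mono[of ?D "\<lambda>_. exp (-4) / real K"] prob_isolated_ge assms by simp
    moreover have "0 \<le> 1 - sqrt u"
      using assms by simp
    ultimately have "(1 - sqrt u) * (real (card ?D) * (exp (-4) / real K))
        \<le> (1 - sqrt u) * (\<Sum>j\<in>?D. \<Sum>x\<in>?C. column_prob N K x * ?I j x)"
      by (rule mult_left_mono)
    then show ?thesis
      by linarith
  qed
  also have "\<dots> \<le> exp (- ((1 - sqrt u) * exp (-4) / real K) * real (card ?D))"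
    using exp_ge_add_one_self[of "- ((1 - sqrt u) * exp (-4) / real K) * real (card ?D)"]
    by (simp add: field_simps)
  also have "\<dots> = exp (- ((1 - sqrt u) * exp (-4) / real K)) ^ card ?D"
    by (subst exp_of_nat_mult[symmetric]) (simp add: algebra_simps)
  finally show ?thesis .
qed

lemma card_defective_sets_diff_le:
  assumes "S \<in> defective_sets N K"
  shows "card {S' \<in> defective_sets N K. card (S - S') = d} \<le> N ^ (2 * d)"
proof -
  let ?A = "{S' \<in> defective_sets N K. card (S - S') = d}"
  let ?P = "{A. A \<subseteq> {..<N} \<and> card A = d}"
  have "inj_on (\<lambda>S'. (S - S', S' - S)) ?A"
  proof (rule inj_onI)
    fix A B
    assume "(S - A, A - S) = (S - B, B - S)"
    then have "(S - (S - A)) \<union> (A - S) = (S - (S - B)) \<union> (B - S)"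
      by simp
    then show "A = B"
      by blast
  qed
  moreover have "(\<lambda>S'. (S - S', S' - S)) ` ?A \<subseteq> ?P \<times> ?P"
  proof (rule image_subsetI)
    fix S' assume S': "S' \<in> ?A"
    have "finite S" "finite S'" "card S' = card S"
      using S' assms by (auto dest: defective_setsD)
    then have "card (S' - S) = card (S - S')"
      by (simp add: card_Diff_subset_Int Int_commute)
    then have "card (S' - S) = d"
      using S' by simp
    then show "(S - S', S' - S) \<in> ?P \<times> ?P"
      using S' assms by (auto dest: defective_setsD)
  qed
  ultimately have "card ?A \<le> card (?P \<times> ?P)"
    by (intro card_inj_on_le) simp_all
  also have "\<dots> = (N choose d) * (N choose d)"
    by (simp add: card_cartesian_product n_subsets)
  also have "\<dots> \<le> N ^ d * N ^ d"
    using binomial_le_pow[of d N] by (cases "d \<le> N") (simp_all add: mult_le_mono binomial_eq_0)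
  finally show ?thesis
    by (simp add: power_add[symmetric] mult_2)
qed

lemma sum_defective_sets_power_le:
  assumes "S \<in> defective_sets N K" "0 \<le> z"
  shows "(\<Sum>S'\<in>defective_sets N K - {S}. z ^ card (S - S')) \<le> (\<Sum>d = 1..K. real N ^ (2 * d) * z ^ d)"
proof -
  let ?D = "defective_sets N K - {S}"
  have range: "(\<lambda>S'. card (S - S')) ` ?D \<subseteq> {1..K}"
  proof (rule image_subsetI)
    fix S' assume "S' \<in> ?D"
    have "S \<noteq> S'" "finite S'" "card S = card S'"
      using \<open>S' \<in> ?D\<close> assms(1) by (auto dest: defective_setsD)
    then have "\<not> S \<subseteq> S'"
      using card_subset_eq by blast
    then show "card (S - S') \<in> {1..K}"
      using assms(1) by (auto simp: card_gt_0_iff Suc_le_eq card_mono dest: defective_setsD)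
  qed
  have "(\<Sum>S'\<in>?D. z ^ card (S - S'))
      = (\<Sum>d = 1..K. \<Sum>S'\<in>{S'\<in>?D. card (S - S') = d}. z ^ card (S - S'))"
    by (rule sum.group[OF finite_Diff[OF finite_defective_sets] finite_atLeastAtMost range, symmetric])
  also have "\<dots> = (\<Sum>d = 1..K. real (card {S'\<in>?D. card (S - S') = d}) * z ^ d)"
    by (intro sum.cong refl) simp
  also have "\<dots> \<le> (\<Sum>d = 1..K. real N ^ (2 * d) * z ^ d)"
  proof (intro sum_mono mult_right_mono)
    fix d
    have "card {S'\<in>?D. card (S - S') = d} \<le> card {S'\<in>defective_sets N K. card (S - S') = d}"
      by (intro card_mono) (auto simp: finite_defective_sets)
    also have "\<dots> \<le> N ^ (2 * d)"
      by (rule card_defective_sets_diff_le[OF assms(1)])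
    finally show "real (card {S'\<in>?D. card (S - S') = d}) \<le> real N ^ (2 * d)"
      by (metis of_nat_le_iff of_nat_power)
  qed (use assms(2) in simp)
  finally show ?thesis .
qed

lemma power_mult_le_inverse_square:
  fixes n z :: real
  assumes "1 \<le> n" "0 \<le> z" "z \<le> 1 / n ^ 4" "1 \<le> d"
  shows "n ^ (2 * d) * z ^ d \<le> 1 / n ^ 2"
proof -
  have "n ^ 2 * z \<le> n ^ 2 * (1 / n ^ 4)"
    using assms(3) by (intro mult_left_mono) simp_all
  also have "\<dots> = 1 / n ^ 2"
    using assms(1) by (simp add: field_simps flip: power_add)
  finally have "n ^ 2 * z \<le> 1 / n ^ 2" .
  then have "(n ^ 2 * z) ^ d \<le> (1 / n ^ 2) ^ d"
    using assms(2) by (intro power_mono) simp_all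
  also have "\<dots> \<le> (1 / n ^ 2) ^ 1"
    using assms(1,4) by (intro power_decreasing) simp_all
  finally show ?thesis
    by (simp add: power_mult power_mult_distrib)
qed

lemma error_given_defective_set_le:
  assumes "2 \<le> K" "K \<le> N" "0 \<le> u" "u \<le> 1" "S \<in> defective_sets N K"
    and "exp (- ((1 - sqrt u) * exp (-4) / real K)) ^ T \<le> 1 / real N ^ 4"
  shows "(\<Sum>X\<in>designs N T. \<Sum>Y\<in>outcomes T.
            if ml_error N K T u X S Y then design_prob N K T X * dilution_lik u T X S Y else 0)
       \<le> 1 / real N"
proof -
  let ?z = "exp (- ((1 - sqrt u) * exp (-4) / real K)) ^ T"
  let ?D = "defective_sets N K - {S}"
  have "(\<Sum>X\<in>designs N T. \<Sum>Y\<in>outcomes T.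
            if ml_error N K T u X S Y then design_prob N K T X * dilution_lik u T X S Y else 0)
      \<le> (\<Sum>S'\<in>?D. bhattacharyya N K u S S' ^ T)"
    using assms by (intro error_le_sum_bhattacharyya)
  also have "\<dots> \<le> (\<Sum>S'\<in>?D. ?z ^ card (S - S'))"
  proof (intro sum_mono)
    fix S' assume "S' \<in> ?D"
    then have "bhattacharyya N K u S S' \<le> exp (- ((1 - sqrt u) * exp (-4) / real K)) ^ card (S - S')"
      using assms by (intro bhattacharyya_le_exp) (auto dest: defective_setsD)
    then have "bhattacharyya N K u S S' ^ T \<le> (exp (- ((1 - sqrt u) * exp (-4) / real K)) ^ card (S - S')) ^ T"
      using assms by (intro power_mono bhattacharyya_nonneg)
    then show "bhattacharyya N K u S S' ^ T \<le> ?z ^ card (S - S')"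
      by (simp flip: power_mult add: mult.commute)
  qed
  also have "\<dots> \<le> (\<Sum>d = 1..K. real N ^ (2 * d) * ?z ^ d)"
    using assms(5) by (rule sum_defective_sets_power_le) simp
  also have "\<dots> \<le> (\<Sum>d = 1..K. 1 / real N ^ 2)"
    using assms by (intro sum_mono power_mult_le_inverse_square) simp_all
  also have "\<dots> \<le> real N / real N ^ 2"
    using assms(2) by (simp add: divide_right_mono)
  also have "\<dots> = 1 / real N"
    by (simp add: power2_eq_square)
  finally show ?thesis .
qed

lemma avg_error_le:
  assumes "2 \<le> K" "K \<le> N" "0 \<le> u" "u \<le> 1"
    and "exp (- ((1 - sqrt u) * exp (-4) / real K)) ^ T \<le> 1 / real N ^ 4"
  shows "avg_error N K T u \<le> 1 / real N"
proof -
  have card: "card (defective_sets N K) = N choose K"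
    unfolding defective_sets_def using n_subsets[of "{..<N}" K] by simp
  have "0 < real (N choose K)"
    using assms(2) by simp
  then have "avg_error N K T u \<le> (\<Sum>S\<in>defective_sets N K. 1 / real N) / real (N choose K)"
    unfolding avg_error_def using assms
    by (intro divide_right_mono sum_mono error_given_defective_set_le) simp_all
  also have "\<dots> = 1 / real N"
    using \<open>0 < real (N choose K)\<close> by (simp add: card)
  finally show ?thesis .
qed

lemma avg_error_nonneg: "0 \<le> u \<Longrightarrow> u \<le> 1 \<Longrightarrow> 0 \<le> avg_error N K T u"
  unfolding avg_error_def
  by (intro divide_nonneg_nonneg sum_nonneg)
     (simp_all add: mult_nonneg_nonneg design_prob_nonneg dilution_lik_nonneg)

text \<open>In the constant \<open>10 * exp 4\<close>, the factor 2 compensates \<open>1 - sqrt u \<ge> (1 - u) / 2\<close>,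
  and 5 rather than 4 absorbs the rounding down of the number of tests.\<close>
definition num_tests :: "real \<Rightarrow> nat \<Rightarrow> nat \<Rightarrow> nat" where
  "num_tests u N K = nat \<lfloor>10 * exp 4 * real K * ln (real N) / (1 - u)\<^sup>2\<rfloor>"

lemma num_tests_le: "u < 1 \<Longrightarrow> real (num_tests u N K) \<le> 10 * exp 4 * real K * ln (real N) / (1 - u)\<^sup>2"
  unfolding num_tests_def by (cases "N = 0") simp_all

lemma one_minus_sqrt_ge:
  assumes "0 \<le> u" "u \<le> 1"
  shows "(1 - u) / 2 \<le> 1 - sqrt u"
proof -
  have "1 - u = (1 - sqrt u) * (1 + sqrt u)"
    using assms by (simp add: algebra_simps)
  also have "\<dots> \<le> (1 - sqrt u) * 2"
    using assms by (intro mult_left_mono) simp_all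
  finally show ?thesis
    by simp
qed

lemma num_tests_suffice:
  assumes "2 \<le> K" "3 \<le> N" "0 \<le> u" "u < 1"
  shows "exp (- ((1 - sqrt u) * exp (-4) / real K)) ^ num_tests u N K \<le> 1 / real N ^ 4"
proof -
  define g where "g = (1 - sqrt u) * exp (-4) / real K"
  define v where "v = 10 * exp 4 * real K * ln (real N) / (1 - u)\<^sup>2"
  have lnN: "1 \<le> ln (real N)"
    using assms(2) exp_le by (subst ln_ge_iff) simp_all
  have "(1 - sqrt u) * exp (-4) \<le> 1 * 1"
    using assms by (intro mult_mono) simp_all
  then have g: "0 \<le> g" "g \<le> 1"
    using assms unfolding g_def by (simp_all add: divide_le_eq)
  have "5 * ln (real N) \<le> 5 * ln (real N) / (1 - u)"
    using assms lnN by (simp add: le_divide_eq)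
  also have "\<dots> = (1 - u) / 2 * 10 * ln (real N) / (1 - u)\<^sup>2"
    using assms by (simp add: divide_simps power2_eq_square)
  also have "\<dots> \<le> (1 - sqrt u) * 10 * ln (real N) / (1 - u)\<^sup>2"
    using assms lnN one_minus_sqrt_ge[of u] by (intro divide_right_mono mult_right_mono) simp_all
  also have "\<dots> = g * v"
    unfolding g_def v_def using assms by (simp add: field_simps exp_minus)
  finally have "5 * ln (real N) \<le> g * v" .
  moreover have "v - 1 \<le> real (num_tests u N K)"
    unfolding num_tests_def v_def[symmetric] by linarith
  then have "g * (v - 1) \<le> g * real (num_tests u N K)"
    using g(1) by (rule mult_left_mono)
  ultimately have "4 * ln (real N) \<le> g * real (num_tests u N K)"
    using g lnN by (simp add: right_diff_distrib)
  then have "exp (- g) ^ num_tests u N K \<le> exp (- (4 * ln (real N)))"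
    by (simp add: exp_of_nat_mult[symmetric] mult.commute)
  also have "\<dots> = 1 / real N ^ 4"
    using assms(2) by (simp add: exp_minus inverse_eq_divide exp_of_nat_mult[where n = 4, simplified])
  finally show ?thesis
    unfolding g_def .
qed

lemma avg_error_num_tests_tendsto_0:
  assumes "0 \<le> u" "u < 1" "\<forall>n. Ks n \<le> Ns n"
    and "filterlim Ns at_top sequentially" "filterlim Ks at_top sequentially"
  shows "(\<lambda>n. avg_error (Ns n) (Ks n) (num_tests u (Ns n) (Ks n)) u) \<longlonglongrightarrow> 0"
proof (rule tendsto_sandwich[OF _ _ tendsto_const])
  show "\<forall>\<^sub>F n in sequentially. 0 \<le> avg_error (Ns n) (Ks n) (num_tests u (Ns n) (Ks n)) u"
    using assms by (simp add: avg_error_nonneg)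
  have "\<forall>\<^sub>F n in sequentially. 2 \<le> Ks n" "\<forall>\<^sub>F n in sequentially. 3 \<le> Ns n"
    using assms(4,5) unfolding filterlim_at_top by blast+
  then show "\<forall>\<^sub>F n in sequentially.
      avg_error (Ns n) (Ks n) (num_tests u (Ns n) (Ks n)) u \<le> 1 / real (Ns n)"
    by eventually_elim (use assms in \<open>simp add: avg_error_le num_tests_suffice\<close>)
  have "filterlim (\<lambda>n. real (Ns n)) at_top sequentially"
    by (rule filterlim_compose[OF filterlim_real_sequentially assms(4)])
  then show "(\<lambda>n. 1 / real (Ns n)) \<longlonglongrightarrow> 0"
    by (simp add: tendsto_inverse_0_at_top flip: inverse_eq_divide)
qed

theorem theorem9:
  "\<exists>C>0. \<forall>u::real. 0 \<le> u \<and> u < 1 \<longrightarrow>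
     (\<forall>Ns Ks :: nat \<Rightarrow> nat.
        filterlim Ns at_top sequentially \<and> filterlim Ks at_top sequentially \<and>
        ((\<lambda>n. real (Ks n) / real (Ns n)) \<longlonglongrightarrow> 0) \<and> (\<forall>n. Ks n \<le> Ns n)
        \<longrightarrow> (\<exists>Ts :: nat \<Rightarrow> nat.
              (\<forall>n. real (Ts n) \<le> C * real (Ks n) * ln (real (Ns n)) / (1 - u)^2) \<and>
              ((\<lambda>n. avg_error (Ns n) (Ks n) (Ts n) u) \<longlonglongrightarrow> 0)))"
proof (intro exI[of _ "10 * exp 4"] conjI allI impI)
  fix u :: real and Ns Ks :: "nat \<Rightarrow> nat"
  assume "0 \<le> u \<and> u < 1"
    and "filterlim Ns at_top sequentially \<and> filterlim Ks at_top sequentially \<and>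
        ((\<lambda>n. real (Ks n) / real (Ns n)) \<longlonglongrightarrow> 0) \<and> (\<forall>n. Ks n \<le> Ns n)"
  then show "\<exists>Ts. (\<forall>n. real (Ts n) \<le> 10 * exp 4 * real (Ks n) * ln (real (Ns n)) / (1 - u)^2) \<and>
              ((\<lambda>n. avg_error (Ns n) (Ks n) (Ts n) u) \<longlonglongrightarrow> 0)"
    by (intro exI[of _ "\<lambda>n. num_tests u (Ns n) (Ks n)"] conjI allI num_tests_le
              avg_error_num_tests_tendsto_0) simp_all
qed simp

end
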